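(* Let $\mathbb{R}^4_+ := \{x \in \mathbb{R}^4 : x_2^2 + x_3^2 + x_4^2 \le 2x_1x_2 \text{ and } x_1 \ge 0\}$ and let $A \in \mathbb{R}^{4\times 4}$ be the block diagonal matrix $$A = \begin{pmatrix} 0 & 1 & 0 & 0\\ 0 & 0 & 0 & 0 \\ 0 & 0 & 0 & 4\pi \\ 0 & 0 & -\pi & 0\end{pmatrix}.$$ Then $\mathbb{R}^4_+$ is a closed cone with non-empty interior, and the semigroup $(e^{tA})_{t\ge 0}$ is individually eventually nonnegative but not uniformly eventually nonnegative with respect to $\mathbb{R}^4_+$.
   Context: Let $X$ be a finite-dimensional real vector space, ordered by a closed cone $X_+$ with non-empty interior, and $A: X\to X$ linear. $(e^{tA})_{t\ge0}$ is uniformly eventually nonnegative if there is $t_0\ge 0$ with $e^{tA}X_+\subseteq X_+$ for all $t\ge t_0$; individually eventually nonnegative if for each $x\in X_+$ there is $t_0\ge0$ with $e^{tA}x\in X_+$ for all $t\ge t_0$. *)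

theory Defs
  imports "HOL-Analysis.Analysis"
begin

primrec mpow :: "real^'n^'n \<Rightarrow> nat \<Rightarrow> real^'n^'n" where
  "mpow M 0 = mat 1"
| "mpow M (Suc k) = M ** mpow M k"

definition mexp :: "real^'n^'n \<Rightarrow> real^'n^'n" where
  "mexp M = (\<Sum>k. (1 / fact k) *\<^sub>R mpow M k)"

text \<open>The cone R^4_+ (coordinates x1..x4 are the indices 1,2,3,4 of type 4).\<close>

definition K4 :: "(real^4) set" where
  "K4 = {x. (x$2)^2 + (x$3)^2 + (x$4)^2 \<le> 2 * x$1 * x$2 \<and> x$1 \<ge> 0}"

definition A4 :: "real^4^4" where
  "A4 = (\<chi> i j. if i = 1 \<and> j = 2 then 1
               else if i = 3 \<and> j = 4 then 4 * pi
               else if i = 4 \<and> j = 3 then - pi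
               else 0)"

definition closed_cone :: "'a::real_normed_vector set \<Rightarrow> bool" where
  "closed_cone C \<longleftrightarrow> closed C \<and> convex C \<and> cone C \<and> C \<inter> uminus ` C = {0}"

definition unif_ev_nonneg :: "real^'n^'n \<Rightarrow> (real^'n) set \<Rightarrow> bool" where
  "unif_ev_nonneg M C \<longleftrightarrow>
     (\<exists>t0\<ge>0. \<forall>t\<ge>t0. (\<lambda>x. mexp (t *\<^sub>R M) *v x) ` C \<subseteq> C)"

definition indiv_ev_nonneg :: "real^'n^'n \<Rightarrow> (real^'n) set \<Rightarrow> bool" where
  "indiv_ev_nonneg M C \<longleftrightarrow>
     (\<forall>x\<in>C. \<exists>t0\<ge>0. \<forall>t\<ge>t0. mexp (t *\<^sub>R M) *v x \<in> C)"

end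

theory Submission
  imports Defs
begin

text \<open>
  The substitution \<open>(x\<^sub>1, x\<^sub>1 - x\<^sub>2, x\<^sub>3, x\<^sub>4)\<close> turns \<open>K4\<close> into the Lorentz cone
  \<open>\<parallel>(x\<^sub>1 - x\<^sub>2, x\<^sub>3, x\<^sub>4)\<parallel> \<le> x\<^sub>1\<close>, which is a closed pointed convex cone with interior.
  The semigroup is explicit: \<open>e\<^sup>t\<^sup>A\<close> shears \<open>x\<^sub>1 \<mapsto> x\<^sub>1 + t x\<^sub>2\<close>, fixes \<open>x\<^sub>2\<close> and moves \<open>(x\<^sub>3, x\<^sub>4)\<close>
  periodically along an ellipse. For a fixed \<open>x \<in> K4\<close> with \<open>x\<^sub>2 > 0\<close> the right-hand side
  \<open>2 (x\<^sub>1 + t x\<^sub>2) x\<^sub>2\<close> of the defining inequality grows linearly while the left-hand side stays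
  bounded, so the orbit eventually stays in \<open>K4\<close>. No time works uniformly: at the quarter
  periods \<open>(x\<^sub>3, x\<^sub>4) \<mapsto> (2 x\<^sub>4, -x\<^sub>3/2)\<close>, which pushes boundary points with large
  \<open>x\<^sub>4\<close> out of the cone.
\<close>

lemma sums_vecI:
  fixes f :: "nat \<Rightarrow> 'a::real_normed_vector^'n"
  assumes "\<And>i. (\<lambda>k. f k $ i) sums a $ i"
  shows "f sums a"
  using assms unfolding sums_def by (auto intro!: vec_tendstoI)

lemma closed_cone_norm_le:
  fixes f :: "'a::real_normed_vector \<Rightarrow> 'b::real_normed_vector" and g :: "'a \<Rightarrow> real"
  assumes f: "bounded_linear f" and g: "bounded_linear g"
    and kernel: "\<And>x. f x = 0 \<Longrightarrow> g x = 0 \<Longrightarrow> x = 0"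
  shows "closed_cone {x. norm (f x) \<le> g x}"
proof -
  interpret f: bounded_linear f by (rule f)
  interpret g: bounded_linear g by (rule g)
  let ?C = "{x. norm (f x) \<le> g x}"
  have "closed ?C"
    by (intro closed_Collect_le continuous_on_norm linear_continuous_on f g)
  moreover have "convex ?C"
  proof (rule convexI)
    fix x y and u v :: real
    assume "x \<in> ?C" "y \<in> ?C" "0 \<le> u" "0 \<le> v"
    then have "norm (u *\<^sub>R f x + v *\<^sub>R f y) \<le> u * norm (f x) + v * norm (f y)"
      using norm_triangle_ineq[of "u *\<^sub>R f x" "v *\<^sub>R f y"] by simp
    also have "\<dots> \<le> u * g x + v * g y"
      using \<open>x \<in> ?C\<close> \<open>y \<in> ?C\<close> \<open>0 \<le> u\<close> \<open>0 \<le> v\<close> by (simp add: add_mono mult_left_mono)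
    finally show "u *\<^sub>R x + v *\<^sub>R y \<in> ?C"
      by (simp add: f.add f.scale g.add g.scale)
  qed
  moreover have "cone ?C"
    unfolding cone_def by (auto simp: f.scale g.scale mult_left_mono)
  moreover have "?C \<inter> uminus ` ?C = {0}"
  proof -
    have "x = 0" if "norm (f x) \<le> g x" "norm (f x) \<le> - g x" for x
    proof -
      have "g x = 0"
        using that norm_ge_zero[of "f x"] by linarith
      with that have "f x = 0"
        by simp
      then show ?thesis
        using \<open>g x = 0\<close> by (rule kernel)
    qed
    then show ?thesis
      by (force simp: f.neg g.neg f.zero g.zero image_iff intro: bexI[of _ 0])
  qed
  ultimately show ?thesis
    unfolding closed_cone_def by blast
qed

lemma norm_less_subset_interior_norm_le:
  fixes f :: "'a::real_normed_vector \<Rightarrow> 'b::real_normed_vector" and g :: "'a \<Rightarrow> real"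
  assumes "continuous_on UNIV f" "continuous_on UNIV g"
  shows "{x. norm (f x) < g x} \<subseteq> interior {x. norm (f x) \<le> g x}"
  by (rule interior_maximal) (auto intro!: open_Collect_less continuous_on_norm assms)

lemma mem_K4: "x \<in> K4 \<longleftrightarrow> (x$2)^2 + (x$3)^2 + (x$4)^2 \<le> 2 * x$1 * x$2 \<and> 0 \<le> x$1"
  by (simp add: K4_def)

lemma K4_nth2_nonneg:
  assumes "x \<in> K4" shows "0 \<le> x$2"
proof (rule ccontr)
  assume "\<not> 0 \<le> x$2"
  then have "2 * x$1 * x$2 \<le> 0" "0 < (x$2)^2"
    using assms by (auto simp: mem_K4 mult_nonneg_nonpos)
  with assms show False
    unfolding mem_K4 using zero_le_power2[of "x$3"] zero_le_power2[of "x$4"] by linarith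
qed

lemma K4_nth34_zero: "x \<in> K4 \<Longrightarrow> x$2 = 0 \<Longrightarrow> x$3 = 0 \<and> x$4 = 0"
  by (auto simp: mem_K4 sum_power2_le_zero_iff)

text \<open>\<open>x\<^sub>1\<^sup>2 - (x\<^sub>1 - x\<^sub>2)\<^sup>2 = 2 x\<^sub>1 x\<^sub>2 - x\<^sub>2\<^sup>2\<close> identifies \<open>K4\<close> with a Lorentz cone in these coordinates.\<close>

definition lorentz_coords :: "real^4 \<Rightarrow> real \<times> real \<times> real" where
  "lorentz_coords x = (x$1 - x$2, x$3, x$4)"

lemma bounded_linear_lorentz_coords: "bounded_linear lorentz_coords"
  unfolding lorentz_coords_def
  by (intro bounded_linear_Pair bounded_linear_sub bounded_linear_vec_nth)

lemma norm_lorentz_coords: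
  "norm (lorentz_coords x) = sqrt ((x$1 - x$2)^2 + (x$3)^2 + (x$4)^2)"
  by (simp add: lorentz_coords_def norm_Pair add.assoc)

lemma K4_eq_norm_le: "K4 = {x. norm (lorentz_coords x) \<le> x$1}"
proof (intro set_eqI)
  fix x :: "real^4"
  let ?s = "(x$1 - x$2)^2 + (x$3)^2 + (x$4)^2"
  have "0 \<le> ?s"
    by simp
  then have "sqrt ?s \<le> x$1 \<longleftrightarrow> ?s \<le> (x$1)^2 \<and> 0 \<le> x$1"
    using real_le_lsqrt[of "x$1" ?s] sqrt_le_D[of ?s "x$1"] real_sqrt_ge_zero[of ?s] by linarith
  moreover have "(x$2)^2 + (x$3)^2 + (x$4)^2 \<le> 2 * x$1 * x$2 \<longleftrightarrow> ?s \<le> (x$1)^2"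
    unfolding power2_diff by linarith
  ultimately show "x \<in> K4 \<longleftrightarrow> x \<in> {x. norm (lorentz_coords x) \<le> x$1}"
    unfolding mem_K4 mem_Collect_eq norm_lorentz_coords by blast
qed

lemma K4_closed_cone: "closed_cone K4"
  unfolding K4_eq_norm_le
  by (rule closed_cone_norm_le[OF bounded_linear_lorentz_coords bounded_linear_vec_nth])
     (auto simp: lorentz_coords_def zero_prod_def vec_eq_iff forall_4)

lemma K4_interior_nonempty: "interior K4 \<noteq> {}"
proof -
  let ?x = "(\<chi> i. if i = 1 \<or> i = 2 then 1 else 0) :: real^4"
  have "?x \<in> {x. norm (lorentz_coords x) < x$1}"
    by (simp add: lorentz_coords_def)
  also have "\<dots> \<subseteq> interior K4"
    unfolding K4_eq_norm_le
    by (intro norm_less_subset_interior_norm_le linear_continuous_on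
        bounded_linear_lorentz_coords bounded_linear_vec_nth)
  finally show ?thesis by blast
qed

text \<open>On the \<open>(x\<^sub>3, x\<^sub>4)\<close> block \<open>A4 = 2\<pi> J\<close> with \<open>J = [[0, 2], [-1/2, 0]]\<close>, \<open>J\<^sup>2 = -1\<close>; the factors \<open>cos_coeff k * fact k\<close>
  and \<open>sin_coeff k * fact k\<close> are the resulting sign patterns \<open>1, 0, -1, 0, \<dots>\<close> and
  \<open>0, 1, 0, -1, \<dots>\<close>.\<close>

definition pow_A4 :: "real \<Rightarrow> nat \<Rightarrow> real^4^4" where
  "pow_A4 t k = (\<chi> i j.
     if i = 1 \<and> j = 1 \<or> i = 2 \<and> j = 2 then (if k = 0 then 1 else 0)
     else if i = 1 \<and> j = 2 then (if k = 1 then t else 0)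
     else if i = 3 \<and> j = 3 \<or> i = 4 \<and> j = 4 then cos_coeff k * fact k * (2*pi*t)^k
     else if i = 3 \<and> j = 4 then 2 * sin_coeff k * fact k * (2*pi*t)^k
     else if i = 4 \<and> j = 3 then - sin_coeff k * fact k * (2*pi*t)^k / 2
     else 0)"

definition exp_A4 :: "real \<Rightarrow> real^4^4" where
  "exp_A4 t = (\<chi> i j.
     if i = 1 \<and> j = 1 \<or> i = 2 \<and> j = 2 then 1
     else if i = 1 \<and> j = 2 then t
     else if i = 3 \<and> j = 3 \<or> i = 4 \<and> j = 4 then cos (2*pi*t)
     else if i = 3 \<and> j = 4 then 2 * sin (2*pi*t)
     else if i = 4 \<and> j = 3 then - sin (2*pi*t) / 2
     else 0)"

lemma mpow_scaled_A4: "mpow (t *\<^sub>R A4) k = pow_A4 t k"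
proof (induction k)
  case 0
  show ?case
    by (simp add: pow_A4_def mat_def vec_eq_iff forall_4 cos_coeff_def sin_coeff_def)
next
  case (Suc k)
  then have "mpow (t *\<^sub>R A4) (Suc k) = (t *\<^sub>R A4) ** pow_A4 t k"
    by simp
  also have "\<dots> = pow_A4 t (Suc k)"
    unfolding pow_A4_def A4_def matrix_matrix_mult_def
    by (simp add: vec_eq_iff forall_4 sum_4 cos_coeff_Suc sin_coeff_Suc)
  finally show ?case .
qed

lemma mexp_scaled_A4: "mexp (t *\<^sub>R A4) = exp_A4 t"
proof -
  have cos: "(\<lambda>k. cos_coeff k * (2*pi*t)^k) sums cos (2*pi*t)"
    using cos_converges[of "2*pi*t"] by simp
  have sin: "(\<lambda>k. sin_coeff k * (2*pi*t)^k) sums sin (2*pi*t)"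
    using sin_converges[of "2*pi*t"] by simp
  have "(\<lambda>k. c * (sin_coeff k * (2*pi*t)^k)) sums (c * sin (2*pi*t))" for c
    using sums_mult[OF sin] .
  from this[of 2] this[of "-1/2"]
  have sin2: "(\<lambda>k. 2 * (sin_coeff k * (2*pi*t)^k)) sums (2 * sin (2*pi*t))"
    and sin_half: "(\<lambda>k. - (sin_coeff k * (2*pi*t)^k / 2)) sums (- (sin (2*pi*t) / 2))"
    by simp_all
  have single: "(\<lambda>k. (if k = n then c else 0) / fact k) sums (c / fact n)" for n and c :: real
  proof -
    have "(\<lambda>k. (if k = n then c else 0) / fact k) = (\<lambda>k. if k = n then c / fact n else 0)"
      by auto
    then show ?thesis
      using sums_single[of n "\<lambda>_. c / fact n"] by simp
  qed
  from single[of 0 1] single[of 1 t]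
  have one: "(\<lambda>k. (if k = 0 then 1 else 0) / fact k) sums (1::real)"
    and lin: "(\<lambda>k. (if k = 1 then t else 0) / fact k) sums t"
    by simp_all
  have "(\<lambda>k. (1 / fact k) *\<^sub>R mpow (t *\<^sub>R A4) k) sums exp_A4 t"
  proof (rule sums_vecI, rule sums_vecI)
    fix i j :: 4
    show "(\<lambda>k. ((1 / fact k) *\<^sub>R mpow (t *\<^sub>R A4) k) $ i $ j) sums exp_A4 t $ i $ j"
      using exhaust_4[of i] exhaust_4[of j]
      by (elim disjE) (simp_all add: mpow_scaled_A4 pow_A4_def exp_A4_def cos sin2 sin_half one lin
          del: One_nat_def)
  qed
  then show ?thesis
    unfolding mexp_def by (rule sums_unique[symmetric])
qed

lemma abs_trig_combination_le:
  fixes a b c s :: real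
  assumes "\<bar>c\<bar> \<le> 1" "\<bar>s\<bar> \<le> 1"
  shows "\<bar>c * a + s * b\<bar> \<le> \<bar>a\<bar> + \<bar>b\<bar>"
proof -
  have "\<bar>c * a\<bar> \<le> \<bar>a\<bar>" "\<bar>s * b\<bar> \<le> \<bar>b\<bar>"
    using assms by (simp_all add: abs_mult mult_left_le_one_le)
  then show ?thesis
    using abs_triangle_ineq[of "c * a" "s * b"] by linarith
qed

lemma exp_A4_mult_vec:
  "(exp_A4 t *v x)$1 = x$1 + t * x$2"
  "(exp_A4 t *v x)$2 = x$2"
  "(exp_A4 t *v x)$3 = cos (2*pi*t) * x$3 + sin (2*pi*t) * (2 * x$4)"
  "(exp_A4 t *v x)$4 = cos (2*pi*t) * x$4 + sin (2*pi*t) * (- x$3 / 2)"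
  unfolding matrix_vector_mult_def exp_A4_def by (simp_all add: sum_4)

lemma exp_A4_rotation_bound:
  "((exp_A4 t *v x)$3)^2 + ((exp_A4 t *v x)$4)^2 \<le> 2 * (\<bar>x$3\<bar> + 2 * \<bar>x$4\<bar>)^2"
proof -
  let ?R = "\<bar>x$3\<bar> + 2 * \<bar>x$4\<bar>"
  have trig: "\<bar>cos (2*pi*t)\<bar> \<le> 1" "\<bar>sin (2*pi*t)\<bar> \<le> 1"
    by (rule abs_cos_le_one abs_sin_le_one)+
  have "\<bar>(exp_A4 t *v x)$3\<bar> \<le> \<bar>?R\<bar>" "\<bar>(exp_A4 t *v x)$4\<bar> \<le> \<bar>?R\<bar>"
    using abs_trig_combination_le[OF trig, of "x$3" "2 * x$4"]
      abs_trig_combination_le[OF trig, of "x$4" "- x$3 / 2"]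
    unfolding exp_A4_mult_vec by auto
  then show ?thesis
    unfolding abs_le_square_iff by simp
qed

lemma exp_A4_mult_vec_mem_K4_iff:
  "exp_A4 t *v x \<in> K4 \<longleftrightarrow>
     (x$2)^2 + ((exp_A4 t *v x)$3)^2 + ((exp_A4 t *v x)$4)^2 \<le> 2 * (x$1 + t * x$2) * x$2
     \<and> 0 \<le> x$1 + t * x$2"
  unfolding mem_K4 by (simp only: exp_A4_mult_vec(1,2))

lemma exp_A4_fixes_degenerate:
  assumes "x$2 = 0" "x$3 = 0" "x$4 = 0" shows "exp_A4 t *v x = x"
  using assms by (simp add: vec_eq_iff forall_4 exp_A4_mult_vec)

lemma exp_A4_eventually_in_K4:
  assumes x: "x \<in> K4" and pos: "0 < x$2" and t: "(\<bar>x$3\<bar> + 2 * \<bar>x$4\<bar>)^2 / (x$2)^2 \<le> t"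
  shows "exp_A4 t *v x \<in> K4"
proof -
  let ?R = "\<bar>x$3\<bar> + 2 * \<bar>x$4\<bar>"
  have "?R^2 \<le> t * (x$2)^2"
    using t pos by (simp add: divide_le_eq)
  moreover have "(x$2)^2 \<le> 2 * x$1 * x$2" "0 \<le> x$1"
    using x zero_le_power2[of "x$3"] zero_le_power2[of "x$4"] unfolding mem_K4 by linarith+
  moreover have "0 \<le> t"
    using t by (rule order_trans[rotated]) simp
  moreover have "2 * (x$1 + t * x$2) * x$2 = 2 * x$1 * x$2 + 2 * (t * (x$2)^2)"
    by (simp add: algebra_simps power2_eq_square)
  ultimately show ?thesis
    unfolding exp_A4_mult_vec_mem_K4_iff
    using exp_A4_rotation_bound[of t x] pos by (simp add: zero_le_mult_iff)
qed

lemma exp_A4_quarter_period_mult_vec: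
  assumes "t = real n + 1/4"
  shows "(exp_A4 t *v x)$3 = 2 * x$4" "(exp_A4 t *v x)$4 = - x$3 / 2"
proof -
  have "2*pi*t = pi/2 + real (2*n) * pi"
    using assms by (simp add: algebra_simps)
  then have "cos (2*pi*t) = 0" "sin (2*pi*t) = 1"
    by (simp_all add: cos_add sin_add)
  then show "(exp_A4 t *v x)$3 = 2 * x$4" "(exp_A4 t *v x)$4 = - x$3 / 2"
    by (simp_all add: exp_A4_mult_vec)
qed

lemma indiv_ev_nonneg_A4: "indiv_ev_nonneg A4 K4"
  unfolding indiv_ev_nonneg_def mexp_scaled_A4
proof
  fix x assume x: "x \<in> K4"
  show "\<exists>t0\<ge>0. \<forall>t\<ge>t0. exp_A4 t *v x \<in> K4"
  proof (cases "x$2 = 0")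
    case True
    then show ?thesis
      using x K4_nth34_zero exp_A4_fixes_degenerate by auto
  next
    case False
    then have "0 < x$2"
      using K4_nth2_nonneg[OF x] by simp
    then show ?thesis
      using x exp_A4_eventually_in_K4 by (intro exI[of _ "(\<bar>x$3\<bar> + 2 * \<bar>x$4\<bar>)^2 / (x$2)^2"]) auto
  qed
qed

lemma not_unif_ev_nonneg_A4: "\<not> unif_ev_nonneg A4 K4"
  unfolding unif_ev_nonneg_def mexp_scaled_A4
proof
  assume "\<exists>t0\<ge>0. \<forall>t\<ge>t0. (\<lambda>x. exp_A4 t *v x) ` K4 \<subseteq> K4"
  then obtain t0 where t0: "\<forall>t\<ge>t0. (\<lambda>x. exp_A4 t *v x) ` K4 \<subseteq> K4"
    by blast
  define t where "t = real (nat \<lceil>t0\<rceil>) + 1/4"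
  have "t0 \<le> t" "0 \<le> t"
    unfolding t_def by linarith+
  \<comment> \<open>a boundary point of \<open>K4\<close>; at time \<open>t\<close> its \<open>x\<^sub>3\<close>-entry becomes \<open>2 (t + 1)\<close>, too large for \<open>x\<^sub>1 + t\<close>\<close>
  define x :: "real^4" where "x = (\<chi> i. if i = 1 then (1 + (t+1)^2) / 2 else if i = 2 then 1
    else if i = 3 then 0 else t+1)"
  have "x \<in> K4"
    unfolding mem_K4 x_def by simp
  then have "exp_A4 t *v x \<in> K4"
    using t0 \<open>t0 \<le> t\<close> by blast
  then have "1 + (2 * (t+1))^2 \<le> 2 * ((1 + (t+1)^2) / 2 + t)"
    unfolding mem_K4 exp_A4_quarter_period_mult_vec[OF t_def]
    by (simp add: exp_A4_mult_vec x_def)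
  with \<open>0 \<le> t\<close> show False
    using zero_le_power2[of t] by (simp add: power_mult_distrib power2_sum)
qed

theorem mainTheorem4:
  shows "closed_cone K4 \<and> interior K4 \<noteq> {}
         \<and> indiv_ev_nonneg A4 K4 \<and> \<not> unif_ev_nonneg A4 K4"
  using K4_closed_cone K4_interior_nonempty indiv_ev_nonneg_A4 not_unif_ev_nonneg_A4 by blast

end
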